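(* In the setting of the context, suppose $G_{xy}^{[1]}=1$ and $G_x\cong\mathrm{Frob}(20)\times C_4$. Then $G_e\cong C_4\wr C_2$.
   Context: $\mathcal{A}=(G_x,G_e,G_{xy})$ is a finite, primitive amalgam of degree $(5,2)$ (no nontrivial subgroup of $G_{xy}$ normal in both $G_x$ and $G_e$; $|G_x:G_{xy}|=5$, $|G_e:G_{xy}|=2$), $G=G_x*_{G_{xy}}G_e$ acts on the coset graph (5-valent tree) $\Gamma$, $x$ is the vertex with stabiliser $G_x$, $y$ the neighbour with $G_e$ the setwise stabiliser of $\{x,y\}$ and $G_x\cap G_y=G_{xy}$. $G_z^{[1]}$ is the pointwise stabiliser of $z$ and its neighbours, $G_{xy}^{[1]}=G_x^{[1]}\cap G_y^{[1]}$. $\mathrm{Frob}(20)$ is the Frobenius group of order 20. *)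

theory Defs
  imports "HOL-Algebra.Algebra"
begin

abbreviation C4 :: "int monoid" where
  "C4 \<equiv> integer_mod_group 4"

text \<open>The Frobenius group of order 20, realised as the affine group AGL(1,5):
  the pair (a,b) with a in {1..4}, b in {0..4} stands for the map z \<mapsto> a z + b
  over the field with 5 elements; the product is composition.\<close>
definition Frob20 :: "(int \<times> int) monoid" where
  "Frob20 = \<lparr> carrier = {(a, b). a \<in> {1..4} \<and> b \<in> {0..4}},
              monoid.mult = (\<lambda>(a, b) (c, d). ((a * c) mod 5, (a * d + b) mod 5)),
              one = (1, 0) \<rparr>"

text \<open>The wreath product C4 wr C2 = (C4 \<times> C4) \<rtimes> C2, where the generator of C2
  swaps the two coordinates: ((f,s)(g,t) = (f + s.g, s + t)).\<close>
definition C4_wr_C2 :: "((int \<times> int) \<times> int) monoid" where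
  "C4_wr_C2 = \<lparr> carrier = {((a, b), s). a \<in> {0..3} \<and> b \<in> {0..3} \<and> s \<in> {0..1}},
     monoid.mult = (\<lambda>((a, b), s) ((c, d), t).
               ((if s = 0 then ((a + c) mod 4, (b + d) mod 4)
                          else ((a + d) mod 4, (b + c) mod 4)), (s + t) mod 2)),
     one = ((0, 0), 0) \<rparr>"

text \<open>For H = G_xy and K = G_x this is G_x^{[1]}, the kernel of the
  action of G_x on the neighbours of x (which correspond to the cosets of G_xy in G_x).\<close>
definition core_in :: "('a, 'b) monoid_scheme \<Rightarrow> 'a set \<Rightarrow> 'a set \<Rightarrow> 'a set" where
  "core_in U K H = (\<Inter>g\<in>K. (g <#\<^bsub>U\<^esub> H) #>\<^bsub>U\<^esub> inv\<^bsub>U\<^esub> g)"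

end

theory Submission
  imports Defs
begin

(* Transport the problem along the isomorphism G_x \<cong> Frob(20) x C4. There G_xy becomes a subgroup
   of order 16; its image in Frob(20) is a 2-group, hence meets the translations (of order 5)
   trivially. So G_xy is abelian, and its core in G_x is the central factor C4 = <a>.
   As |G_e : G_xy| = 2, any t in G_e - G_xy normalises G_xy and squares into it. For b = t a t^-1
   the hypothesis G_xy^[1] = 1 says <a> and <b> meet trivially, so G_xy = <a> x <b>, and
   conjugation by t swaps a and b. Hence t^2 = a^i b^i for some i, s = t a^-i is an involution
   swapping a and b, and ((i, j), k) |-> a^i b^j s^k is an isomorphism from C4 wr C2 onto G_e. *)

section \<open>The Frobenius group of order 20\<close>

lemma Frob20_carrier: "carrier Frob20 = {1..4} \<times> {0..4}"
  by (auto simp: Frob20_def)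

lemma Frob20_mult [simp]: "(a, b) \<otimes>\<^bsub>Frob20\<^esub> (c, d) = ((a * c) mod 5, (a * d + b) mod 5)"
  by (simp add: Frob20_def)

lemma Frob20_one [simp]: "\<one>\<^bsub>Frob20\<^esub> = (1, 0)"
  by (simp add: Frob20_def)

lemma Frob20_m_assoc: "x \<otimes>\<^bsub>Frob20\<^esub> y \<otimes>\<^bsub>Frob20\<^esub> z = x \<otimes>\<^bsub>Frob20\<^esub> (y \<otimes>\<^bsub>Frob20\<^esub> z)"
proof -
  obtain a b c d e f where xyz: "x = (a, b)" "y = (c, d)" "z = (e, f)"
    by (metis prod.exhaust)
  have "(a * c mod 5 * e) mod 5 = (a * (c * e mod 5)) mod 5"
    by (simp add: mod_simps mult.assoc)
  moreover have "(a * c mod 5 * f + (a * d + b) mod 5) mod 5 = (a * ((c * f + d) mod 5) + b) mod 5"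
  proof -
    have "(a * c mod 5 * f + (a * d + b) mod 5) mod 5 = (a * c * f + (a * d + b)) mod 5"
      by (rule mod_add_cong) (simp_all add: mod_simps)
    also have "\<dots> = (a * (c * f + d) + b) mod 5"
      by (simp add: algebra_simps)
    also have "\<dots> = (a * ((c * f + d) mod 5) + b) mod 5"
      by (rule mod_add_cong) (simp_all add: mod_simps)
    finally show ?thesis .
  qed
  ultimately show ?thesis
    using xyz by (simp only: Frob20_mult)
qed

lemma mult_mod_5_nonzero: "(a::int) \<in> {1..4} \<Longrightarrow> c \<in> {1..4} \<Longrightarrow> (a * c) mod 5 \<in> {1..4}"
proof -
  assume "a \<in> {1..4}" "c \<in> {1..4}"
  then have "a = 1 \<or> a = 2 \<or> a = 3 \<or> a = 4" "c = 1 \<or> c = 2 \<or> c = 3 \<or> c = 4"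
    by auto
  then show ?thesis
    by (elim disjE) simp_all
qed

lemma Frob20_m_closed:
  assumes "x \<in> carrier Frob20" "y \<in> carrier Frob20"
  shows "x \<otimes>\<^bsub>Frob20\<^esub> y \<in> carrier Frob20"
proof -
  obtain a b c d where "x = (a, b)" "y = (c, d)" "a \<in> {1..4}" "c \<in> {1..4}"
    using assms by (auto simp: Frob20_carrier)
  moreover have "(a * c) mod 5 \<in> {1..4}"
    using calculation by (simp only: mult_mod_5_nonzero)
  ultimately show ?thesis
    by (simp add: Frob20_carrier)
qed

lemma Frob20_l_inv_ex:
  assumes "x \<in> carrier Frob20"
  shows "\<exists>y\<in>carrier Frob20. y \<otimes>\<^bsub>Frob20\<^esub> x = \<one>\<^bsub>Frob20\<^esub>"
proof -
  obtain a b where ab: "x = (a, b)" "a \<in> {1..4}"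
    using assms by (auto simp: Frob20_carrier)
  then have "a = 1 \<or> a = 2 \<or> a = 3 \<or> a = 4"
    by auto
  then have "a ^ 3 mod 5 \<in> {1..4} \<and> (a ^ 3 mod 5 * a) mod 5 = 1 \<and>
      (a ^ 3 mod 5 * b + (- (a ^ 3 * b)) mod 5) mod 5 = 0"
    by (elim disjE) (simp_all add: mod_simps)
  then have "(a ^ 3 mod 5, (- (a ^ 3 * b)) mod 5) \<in> carrier Frob20 \<and>
      (a ^ 3 mod 5, (- (a ^ 3 * b)) mod 5) \<otimes>\<^bsub>Frob20\<^esub> x = \<one>\<^bsub>Frob20\<^esub>"
    using ab(1) by (simp add: Frob20_carrier)
  then show ?thesis
    by blast
qed

lemma group_Frob20: "group Frob20"
proof (rule groupI)
  show "\<one>\<^bsub>Frob20\<^esub> \<in> carrier Frob20"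
    by (simp add: Frob20_carrier)
  show "\<one>\<^bsub>Frob20\<^esub> \<otimes>\<^bsub>Frob20\<^esub> x = x" if "x \<in> carrier Frob20" for x
    using that by (auto simp: Frob20_carrier)
  show "\<exists>y\<in>carrier Frob20. y \<otimes>\<^bsub>Frob20\<^esub> x = \<one>\<^bsub>Frob20\<^esub>" if "x \<in> carrier Frob20" for x
    using that by (rule Frob20_l_inv_ex)
qed (simp_all add: Frob20_m_assoc Frob20_m_closed)

lemma Frob20_fst_mult: "fst (x \<otimes>\<^bsub>Frob20\<^esub> y) = (fst x * fst y) mod 5"
  by (cases x, cases y) simp

lemma Frob20_translation_pow: "(1, b) [^]\<^bsub>Frob20\<^esub> (n::nat) = (1, (int n * b) mod 5)"
  by (induction n) (simp_all add: mod_simps algebra_simps)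

lemma Frob20_translation_pow_16:
  assumes "(1, b) \<in> carrier Frob20" "(1, b) [^]\<^bsub>Frob20\<^esub> (16::nat) = \<one>\<^bsub>Frob20\<^esub>"
  shows "b = 0"
proof -
  have "(16 * b) mod 5 = 0"
    using assms(2) by (simp add: Frob20_translation_pow)
  moreover have "b = 0 \<or> b = 1 \<or> b = 2 \<or> b = 3 \<or> b = 4"
    using assms(1) by (auto simp: Frob20_carrier)
  ultimately show ?thesis
    by auto
qed

(* Nontrivial translations have order 5, so elements of K with equal slope coincide. *)
lemma Frob20_inj_on_fst:
  assumes K: "subgroup K Frob20" and exp: "\<And>k. k \<in> K \<Longrightarrow> k [^]\<^bsub>Frob20\<^esub> (16::nat) = \<one>\<^bsub>Frob20\<^esub>"
  shows "inj_on fst K"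
proof (rule inj_onI)
  interpret Frob20: group Frob20
    by (rule group_Frob20)
  fix k l
  assume kl: "k \<in> K" "l \<in> K" "fst k = fst l"
  then have kl_carrier: "k \<in> carrier Frob20" "l \<in> carrier Frob20"
    using subgroup.subset[OF K] by auto
  define h where "h = inv\<^bsub>Frob20\<^esub> l \<otimes>\<^bsub>Frob20\<^esub> k"
  have "h \<in> K"
    unfolding h_def using kl K by (simp add: subgroup.m_closed subgroup.m_inv_closed)
  have "fst h = fst (inv\<^bsub>Frob20\<^esub> l \<otimes>\<^bsub>Frob20\<^esub> l)"
    unfolding h_def Frob20_fst_mult using kl(3) by simp
  then have "h = (1, snd h)"
    using kl_carrier by (simp add: prod_eq_iff)
  then have "snd h = 0"
    using \<open>h \<in> K\<close> Frob20_translation_pow_16 subgroup.subset[OF K] exp by (metis subsetD)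
  then have "h = \<one>\<^bsub>Frob20\<^esub>"
    using \<open>h = (1, snd h)\<close> by simp
  then show "k = l"
    unfolding h_def using kl_carrier by (metis Frob20.inv_equality Frob20.inv_inv Frob20.inv_closed)
qed

lemma (in group) inv_mult_cancel_left [simp]: "x \<in> carrier G \<Longrightarrow> y \<in> carrier G \<Longrightarrow> inv x \<otimes> (x \<otimes> y) = y"
  by (simp add: m_assoc[symmetric])

lemma (in group) mult_inv_cancel_left [simp]: "x \<in> carrier G \<Longrightarrow> y \<in> carrier G \<Longrightarrow> x \<otimes> (inv x \<otimes> y) = y"
  by (simp add: m_assoc[symmetric])

lemma (in group) subgroup_pow_card_eq_one:
  assumes "subgroup H G" "x \<in> H"
  shows "x [^] card H = \<one>"
proof -
  have "x [^]\<^bsub>G\<lparr>carrier := H\<rparr>\<^esub> order (G\<lparr>carrier := H\<rparr>) = \<one>\<^bsub>G\<lparr>carrier := H\<rparr>\<^esub>"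
    using assms by (simp add: group.pow_order_eq_1[OF subgroup.subgroup_is_group[OF assms(1) is_group]])
  then show ?thesis
    unfolding order_def nat_pow_consistent[symmetric] by simp
qed

lemma fst_hom_DirProd: "fst \<in> hom (G \<times>\<times> H) G"
  by (auto simp: hom_def mult_DirProd')

lemma (in group) int_pow_mod:
  assumes "x \<in> carrier G" "x [^] n = \<one>"
  shows "x [^] (m mod int n) = x [^] m"
proof -
  have "ord x dvd n"
    using assms by (simp add: pow_eq_id)
  moreover have "int n dvd m - m mod int n"
    by (simp add: minus_mod_eq_mult_div)
  ultimately show ?thesis
    using assms(1) by (simp add: int_pow_eq dvd_trans[of "int (ord x)" "int n"])
qed

lemma (in group) conj_int_pow:
  assumes "g \<in> carrier G" "x \<in> carrier G"
  shows "g \<otimes> x [^] (n::int) \<otimes> inv g = (g \<otimes> x \<otimes> inv g) [^] n"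
proof -
  have "(\<lambda>y. g \<otimes> y \<otimes> inv g) \<in> hom G G"
    using assms(1) by (intro homI) (simp_all add: m_assoc)
  then show ?thesis
    using hom_int_pow[of "\<lambda>y. g \<otimes> y \<otimes> inv g" G G x n] assms(2) is_group by simp
qed

lemma (in group) mult_int_pow_conj:
  assumes "g \<in> carrier G" "x \<in> carrier G" "z \<in> carrier G"
  shows "g \<otimes> (x [^] (n::int) \<otimes> z) = (g \<otimes> x \<otimes> inv g) [^] n \<otimes> (g \<otimes> z)"
  unfolding conj_int_pow[OF assms(1,2), symmetric] using assms by (simp add: m_assoc)

lemma (in group) conj_conj_involution:
  assumes "s \<in> carrier G" "s \<otimes> s = \<one>" "x \<in> carrier G"
  shows "s \<otimes> (s \<otimes> x \<otimes> inv s) \<otimes> inv s = x"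
proof -
  have "inv s = s"
    using assms(1,2) by (simp add: inv_equality)
  moreover have "s \<otimes> (s \<otimes> y) = y" if "y \<in> carrier G" for y
    using that assms(1,2) by (simp flip: m_assoc)
  ultimately show ?thesis
    using assms by (simp add: m_assoc)
qed

lemma (in group) ord_conj:
  assumes "g \<in> carrier G" "x \<in> carrier G"
  shows "ord (g \<otimes> x \<otimes> inv g) = ord x"
proof -
  have "(g \<otimes> x \<otimes> inv g) [^] n = \<one> \<longleftrightarrow> x [^] n = \<one>" for n :: nat
    using conj_int_pow[OF assms, of "int n"] assms by (auto simp: int_pow_int inv_solve_right')
  then show ?thesis
    using assms by (simp add: ord_unique pow_eq_id)
qed

lemma (in group) ord_consistent:
  assumes "subgroup H G" "x \<in> H"
  shows "group.ord (G\<lparr>carrier := H\<rparr>) x = ord x"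
proof -
  interpret H: group "G\<lparr>carrier := H\<rparr>"
    by (rule subgroup.subgroup_is_group[OF assms(1) is_group])
  show ?thesis
    using assms by (simp add: H.ord_unique pow_eq_id subgroup.mem_carrier flip: nat_pow_consistent)
qed

lemma (in group_hom) ord_inj_image:
  assumes "inj_on h (carrier G)" "x \<in> carrier G"
  shows "group.ord H (h x) = group.ord G x"
proof -
  have "h x [^]\<^bsub>H\<^esub> n = \<one>\<^bsub>H\<^esub> \<longleftrightarrow> x [^] n = \<one>" for n :: nat
    using assms hom_nat_pow[of x n] by (metis G.nat_pow_closed G.one_closed hom_one inj_onD)
  then show ?thesis
    using assms(2) by (simp add: H.ord_unique G.pow_eq_id)
qed

lemma (in group) int_pow_pair_cancel:
  fixes i j k l :: int
  assumes ab: "a \<in> carrier G" "b \<in> carrier G"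
    and disjoint: "range (\<lambda>n::int. a [^] n) \<inter> range (\<lambda>n::int. b [^] n) = {\<one>}"
    and eq: "a [^] i \<otimes> b [^] j = a [^] k \<otimes> b [^] l"
  shows "a [^] i = a [^] k" and "b [^] j = b [^] l"
proof -
  have "a [^] (i - k) = a [^] (- k + i)"
    by simp
  also have "\<dots> = inv (a [^] k) \<otimes> a [^] i"
    by (simp only: int_pow_mult[OF ab(1)] int_pow_neg[OF ab(1)])
  also have "\<dots> = inv (a [^] k) \<otimes> (a [^] i \<otimes> b [^] j) \<otimes> inv (b [^] j)"
    using ab by (simp add: m_assoc)
  also have "\<dots> = b [^] l \<otimes> inv (b [^] j)"
    using ab unfolding eq by (simp add: m_assoc)
  also have "\<dots> = b [^] (l - j)"
    using ab(2) by (simp add: int_pow_diff)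
  finally have pows_eq: "a [^] (i - k) = b [^] (l - j)" .
  then have "a [^] (i - k) \<in> range (\<lambda>n::int. a [^] n) \<inter> range (\<lambda>n::int. b [^] n)"
    by (metis IntI rangeI)
  then have a_one: "a [^] (i - k) = \<one>"
    using disjoint by blast
  then have b_one: "b [^] (l - j) = \<one>"
    using pows_eq by simp
  show "a [^] i = a [^] k"
    using a_one ab(1) by (simp add: int_pow_diff inv_solve_right')
  show "b [^] j = b [^] l"
    using b_one ab(2) by (simp add: int_pow_diff inv_solve_right')
qed

lemma (in group) int_pow_pair_inj:
  assumes ab: "a \<in> carrier G" "b \<in> carrier G" "ord a = n" "ord b = n"
    and disjoint: "range (\<lambda>k::int. a [^] k) \<inter> range (\<lambda>k::int. b [^] k) = {\<one>}"
  shows "inj_on (\<lambda>(i, j). a [^] i \<otimes> b [^] j) ({0..<int n} \<times> {0..<int n})"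
proof (rule inj_onI)
  fix p q
  assume "p \<in> {0..<int n} \<times> {0..<int n}" "q \<in> {0..<int n} \<times> {0..<int n}"
    and eq: "(\<lambda>(i, j). a [^] i \<otimes> b [^] j) p = (\<lambda>(i, j). a [^] i \<otimes> b [^] j) q"
  then obtain i j c d where pq: "p = (i, j)" "q = (c, d)"
    and ranges: "i \<in> {0..<int n}" "j \<in> {0..<int n}" "c \<in> {0..<int n}" "d \<in> {0..<int n}"
    by auto
  then have "a [^] i = a [^] c" "b [^] j = b [^] d"
    using eq int_pow_pair_cancel[OF ab(1,2) disjoint] by simp_all
  then have "c mod int n = i mod int n" "d mod int n = j mod int n"
    using ab by (simp_all add: int_pow_eq mod_eq_dvd_iff)
  then show "p = q"
    using pq ranges by (simp add: mod_pos_pos_trivial)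
qed

lemma (in group) subgroup_int_pow_pairs:
  assumes H: "subgroup H G" "card H = n * n" "0 < n"
    and ab: "a \<in> H" "b \<in> H" "ord a = n" "ord b = n"
    and disjoint: "range (\<lambda>k::int. a [^] k) \<inter> range (\<lambda>k::int. b [^] k) = {\<one>}"
    and x: "x \<in> H"
  obtains i j :: int where "x = a [^] i \<otimes> b [^] j"
proof -
  have ab_carrier: "a \<in> carrier G" "b \<in> carrier G"
    using ab subgroup.subset[OF H(1)] by auto
  have "card ((\<lambda>(i, j). a [^] i \<otimes> b [^] j) ` ({0..<int n} \<times> {0..<int n})) = card H"
    using int_pow_pair_inj[OF ab_carrier ab(3,4) disjoint] H(2)
    by (simp add: card_image card_cartesian_product)
  moreover have "(\<lambda>(i, j). a [^] i \<otimes> b [^] j) ` ({0..<int n} \<times> {0..<int n}) \<subseteq> H"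
    using ab by (auto intro!: subgroup.m_closed[OF H(1)] subgroup_int_pow_closed[OF H(1)])
  moreover have "finite H"
    using H(2,3) by (intro card_ge_0_finite) simp
  ultimately have "(\<lambda>(i, j). a [^] i \<otimes> b [^] j) ` ({0..<int n} \<times> {0..<int n}) = H"
    by (intro card_subset_eq) auto
  then obtain i j :: int where "x = a [^] i \<otimes> b [^] j"
    using x by fastforce
  then show thesis
    by (rule that)
qed

lemma (in group) mem_core_in_iff:
  assumes "K \<subseteq> carrier G" "H \<subseteq> carrier G" "K \<noteq> {}"
  shows "x \<in> core_in G K H \<longleftrightarrow> x \<in> carrier G \<and> (\<forall>g\<in>K. inv g \<otimes> x \<otimes> g \<in> H)"
proof -
  have conj: "x \<in> (g <#\<^bsub>G\<^esub> H) #> inv g \<longleftrightarrow> x \<in> carrier G \<and> inv g \<otimes> x \<otimes> g \<in> H"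
    if g: "g \<in> carrier G" for g
  proof
    assume "x \<in> (g <#\<^bsub>G\<^esub> H) #> inv g"
    then obtain h where h: "h \<in> H" "x = g \<otimes> h \<otimes> inv g"
      by (auto simp: l_coset_def r_coset_def)
    moreover have "h \<in> carrier G"
      using h(1) assms(2) by blast
    ultimately show "x \<in> carrier G \<and> inv g \<otimes> x \<otimes> g \<in> H"
      using g by (simp add: m_assoc)
  next
    assume x: "x \<in> carrier G \<and> inv g \<otimes> x \<otimes> g \<in> H"
    then have "x = g \<otimes> (inv g \<otimes> x \<otimes> g) \<otimes> inv g"
      using g by (simp add: m_assoc)
    with x show "x \<in> (g <#\<^bsub>G\<^esub> H) #> inv g"
      by (force simp: l_coset_def r_coset_def)
  qed
  show ?thesis
    unfolding core_in_def using conj assms by blast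
qed

lemma (in group) core_in_subset:
  assumes "K \<subseteq> carrier G" "H \<subseteq> carrier G" "\<one> \<in> K"
  shows "core_in G K H \<subseteq> H"
  using assms mem_core_in_iff[OF assms(1,2)] by fastforce

lemma (in group) central_mem_core_in:
  assumes "H \<subseteq> carrier G" "z \<in> H" "\<And>g. g \<in> carrier G \<Longrightarrow> z \<otimes> g = g \<otimes> z"
  shows "z \<in> core_in G (carrier G) H"
proof -
  have z: "z \<in> carrier G"
    using assms(1,2) by blast
  have "inv g \<otimes> z \<otimes> g = z" if "g \<in> carrier G" for g
    using z that by (simp add: m_assoc assms(3)[OF that])
  then show ?thesis
    by (subst mem_core_in_iff[OF subset_refl assms(1)]) (use z assms(2) one_closed in auto)
qed

lemma (in group) core_in_consistent:
  assumes "subgroup K G"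
  shows "core_in (G\<lparr>carrier := K\<rparr>) K H = core_in G K H"
  using assms unfolding core_in_def l_coset_def r_coset_def by (simp cong: INF_cong)

lemma (in group_hom) inj_image_eq_range_int_pow:
  assumes inj: "inj_on h (carrier G)" and S: "S \<subseteq> carrier G" and a: "a \<in> carrier G"
    and image: "h ` S = range (\<lambda>n::int. h a [^]\<^bsub>H\<^esub> n)"
  shows "S = range (\<lambda>n::int. a [^] n)"
proof -
  have "h ` range (\<lambda>n::int. a [^] n) = h ` S"
    unfolding image image_image using a by (simp add: hom_int_pow)
  then show ?thesis
    using S a by (subst (asm) inj_on_image_eq_iff[OF inj]) auto
qed

lemma (in group_hom) core_in_image:
  assumes bij: "bij_betw h (carrier G) (carrier H)" and S: "S \<subseteq> carrier G"
  shows "h ` core_in G (carrier G) S = core_in H (carrier H) (h ` S)"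
proof -
  have inj: "inj_on h (carrier G)" and surj: "h ` carrier G = carrier H"
    using bij by (simp_all add: bij_betw_def)
  have core_G: "x \<in> core_in G (carrier G) S \<longleftrightarrow> x \<in> carrier G \<and> (\<forall>g\<in>carrier G. inv g \<otimes> x \<otimes> g \<in> S)" for x
    using S by (intro G.mem_core_in_iff) auto
  have core_H: "y \<in> core_in H (carrier H) (h ` S) \<longleftrightarrow>
      y \<in> carrier H \<and> (\<forall>g\<in>carrier H. inv\<^bsub>H\<^esub> g \<otimes>\<^bsub>H\<^esub> y \<otimes>\<^bsub>H\<^esub> g \<in> h ` S)" for y
    using S by (intro H.mem_core_in_iff) auto
  have mem_iff: "h x \<in> core_in H (carrier H) (h ` S) \<longleftrightarrow> x \<in> core_in G (carrier G) S"
    if x: "x \<in> carrier G" for x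
  proof -
    have "inv\<^bsub>H\<^esub> h g \<otimes>\<^bsub>H\<^esub> h x \<otimes>\<^bsub>H\<^esub> h g \<in> h ` S \<longleftrightarrow> inv g \<otimes> x \<otimes> g \<in> S"
      if g: "g \<in> carrier G" for g
    proof -
      have eq: "inv\<^bsub>H\<^esub> h g \<otimes>\<^bsub>H\<^esub> h x \<otimes>\<^bsub>H\<^esub> h g = h (inv g \<otimes> x \<otimes> g)"
        using g x by simp
      show ?thesis
        unfolding eq using g x S by (intro inj_on_image_mem_iff[OF inj]) auto
    qed
    then have "(\<forall>g\<in>carrier H. inv\<^bsub>H\<^esub> g \<otimes>\<^bsub>H\<^esub> h x \<otimes>\<^bsub>H\<^esub> g \<in> h ` S) \<longleftrightarrow>
        (\<forall>g\<in>carrier G. inv g \<otimes> x \<otimes> g \<in> S)"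
      using x by (simp add: surj[symmetric])
    then show ?thesis
      using x core_G core_H by simp
  qed
  show ?thesis
  proof
    show "h ` core_in G (carrier G) S \<subseteq> core_in H (carrier H) (h ` S)"
      using mem_iff core_G by blast
    show "core_in H (carrier H) (h ` S) \<subseteq> h ` core_in G (carrier G) S"
    proof
      fix y
      assume y: "y \<in> core_in H (carrier H) (h ` S)"
      then obtain x where "x \<in> carrier G" "y = h x"
        using core_H surj by blast
      then show "y \<in> h ` core_in G (carrier G) S"
        using mem_iff y by blast
    qed
  qed
qed

lemma (in group) conj_coset_eq_image:
  assumes "H \<subseteq> carrier G" "t \<in> carrier G"
  shows "(t <#\<^bsub>G\<^esub> H) #> inv t = (\<lambda>h. t \<otimes> h \<otimes> inv t) ` H"
  using assms by (auto simp: l_coset_def r_coset_def)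

lemma (in group) index_two_coset:
  assumes H: "subgroup H G" and E: "subgroup E G" "H \<subseteq> E" "finite E" "card E = 2 * card H"
    and t: "t \<in> E" "t \<notin> H" and g: "g \<in> E" "g \<notin> H"
  shows "inv t \<otimes> g \<in> H"
proof -
  have t_carrier: "t \<in> carrier G"
    using t(1) subgroup.subset[OF E(1)] by blast
  have H_carrier: "H \<subseteq> carrier G"
    by (rule subgroup.subset[OF H])
  have "(\<lambda>h. t \<otimes> h) ` H \<subseteq> E"
    using t(1) E(2) subgroup.m_closed[OF E(1)] by auto
  moreover have "H \<inter> (\<lambda>h. t \<otimes> h) ` H = {}"
  proof -
    have "t \<in> H" if "h \<in> H" "t \<otimes> h \<in> H" for h
      using that t_carrier H_carrier subgroup.m_closed[OF H] subgroup.m_inv_closed[OF H]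
      by (metis (no_types, lifting) inv_solve_right' subsetD)
    then show ?thesis
      using t(2) by auto
  qed
  moreover have "card ((\<lambda>h. t \<otimes> h) ` H) = card H"
    using inj_on_subset[OF inj_on_cmult[OF t_carrier] H_carrier] by (simp add: card_image)
  ultimately have "H \<union> (\<lambda>h. t \<otimes> h) ` H = E"
    using E by (intro card_subset_eq) (auto simp: card_Un_disjoint finite_subset)
  then obtain h where "h \<in> H" "g = t \<otimes> h"
    using g by auto
  then show ?thesis
    using t_carrier H_carrier by auto
qed

lemma (in group) index_two_normal:
  assumes H: "subgroup H G" and E: "subgroup E G" "H \<subseteq> E" "finite E" "card E = 2 * card H"
    and t: "t \<in> E" "t \<notin> H"
  shows "t \<otimes> t \<in> H" and "\<And>h. h \<in> H \<Longrightarrow> t \<otimes> h \<otimes> inv t \<in> H"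
proof -
  have t_carrier: "t \<in> carrier G"
    using t(1) subgroup.subset[OF E(1)] by blast
  show "t \<otimes> t \<in> H"
  proof (rule ccontr)
    assume "t \<otimes> t \<notin> H"
    then have "inv t \<otimes> (t \<otimes> t) \<in> H"
      using t subgroup.m_closed[OF E(1)] by (intro index_two_coset[OF H E t]) auto
    with t t_carrier show False
      by simp
  qed
  fix h
  assume h: "h \<in> H"
  then have h_carrier: "h \<in> carrier G"
    using subgroup.subset[OF H] by blast
  show "t \<otimes> h \<otimes> inv t \<in> H"
  proof (rule ccontr)
    assume "t \<otimes> h \<otimes> inv t \<notin> H"
    then have "inv t \<otimes> (t \<otimes> h \<otimes> inv t) \<in> H"
      using t h E(2) subgroup.m_closed[OF E(1)] subgroup.m_inv_closed[OF E(1)]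
      by (intro index_two_coset[OF H E t]) auto
    then have "h \<otimes> inv t \<in> H"
      using h_carrier t_carrier by (simp add: m_assoc)
    then have "inv h \<otimes> (h \<otimes> inv t) \<in> H"
      using h subgroup.m_closed[OF H] subgroup.m_inv_closed[OF H] by blast
    then have "inv t \<in> H"
      using h_carrier t_carrier by simp
    with t(2) t_carrier show False
      using subgroup.m_inv_closed[OF H] by fastforce
  qed
qed

lemma iso_of_bij_hom:
  assumes f: "f \<in> hom M G" "bij_betw f (carrier M) (carrier G)"
    and closed: "\<And>x y. x \<in> carrier M \<Longrightarrow> y \<in> carrier M \<Longrightarrow> x \<otimes>\<^bsub>M\<^esub> y \<in> carrier M"
  shows "G \<cong> M"
proof -
  define g where "g = inv_into (carrier M) f"
  have g: "bij_betw g (carrier G) (carrier M)"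
    unfolding g_def by (rule bij_betw_inv_into[OF f(2)])
  have "g \<in> hom G M"
  proof (rule homI)
    show "g x \<in> carrier M" if "x \<in> carrier G" for x
      using g that by (meson bij_betwE)
    show "g (x \<otimes>\<^bsub>G\<^esub> y) = g x \<otimes>\<^bsub>M\<^esub> g y" if "x \<in> carrier G" "y \<in> carrier G" for x y
    proof -
      have gxy: "g x \<in> carrier M" "g y \<in> carrier M"
        using g that by (meson bij_betwE)+
      have "f (g x \<otimes>\<^bsub>M\<^esub> g y) = x \<otimes>\<^bsub>G\<^esub> y"
        using f gxy that unfolding g_def by (simp add: hom_mult bij_betw_inv_into_right)
      then show ?thesis
        unfolding g_def using f(2) closed[OF gxy[unfolded g_def]]
        by (intro inv_into_f_eq) (simp_all add: bij_betw_def)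
    qed
  qed
  then show ?thesis
    using g by (auto simp: is_iso_def iso_def)
qed

section \<open>Subgroups of index 5 in Frob(20) x C4\<close>

lemma group_Frob20_C4: "group (Frob20 \<times>\<times> C4)"
  by (simp add: DirProd_group group_Frob20)

lemma card_Frob20_C4: "card (carrier (Frob20 \<times>\<times> C4)) = 80"
  by (simp add: Frob20_carrier carrier_integer_mod_group card_cartesian_product)

lemma Frob20_C4_subgroup_16:
  assumes H: "subgroup H (Frob20 \<times>\<times> C4)" and card_H: "card H = 16"
  shows "H = fst ` H \<times> carrier C4" and "inj_on fst (fst ` H)"
proof -
  interpret fst: group_hom "Frob20 \<times>\<times> C4" Frob20 fst
    by (simp add: group_hom_def group_hom_axioms_def group_Frob20_C4 group_Frob20 fst_hom_DirProd)
  have K: "subgroup (fst ` H) Frob20"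
    by (rule fst.subgroup_img_is_subgroup[OF H])
  have "fst x [^]\<^bsub>Frob20\<^esub> (16::nat) = \<one>\<^bsub>Frob20\<^esub>" if x: "x \<in> H" for x
  proof -
    have "x [^]\<^bsub>Frob20 \<times>\<times> C4\<^esub> (16::nat) = \<one>\<^bsub>Frob20 \<times>\<times> C4\<^esub>"
      using fst.G.subgroup_pow_card_eq_one[OF H x] card_H by simp
    then show ?thesis
      using fst.hom_nat_pow[of x 16] x subgroup.subset[OF H] by auto
  qed
  then show inj: "inj_on fst (fst ` H)"
    by (intro Frob20_inj_on_fst[OF K]) blast
  have "card (fst ` H) = card (fst ` fst ` H)"
    using inj by (simp add: card_image)
  also have "\<dots> \<le> card {1..4::int}"
    using subgroup.subset[OF K] by (intro card_mono) (auto simp: Frob20_carrier)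
  finally have "card (fst ` H \<times> carrier C4) \<le> card H"
    using card_H by (simp add: card_cartesian_product carrier_integer_mod_group)
  moreover have "H \<subseteq> fst ` H \<times> carrier C4"
  proof
    fix x
    assume "x \<in> H"
    then show "x \<in> fst ` H \<times> carrier C4"
      using subgroup.subset[OF H] by (auto simp: mem_Times_iff)
  qed
  moreover have "finite (fst ` H \<times> carrier C4)"
    using subgroup.subset[OF K] finite_subset[of "fst ` H" "{1..4} \<times> {0..4}"]
    by (simp add: Frob20_carrier carrier_integer_mod_group)
  ultimately show "H = fst ` H \<times> carrier C4"
    by (metis card_seteq)
qed

lemma Frob20_C4_subgroup_16_comm:
  assumes H: "subgroup H (Frob20 \<times>\<times> C4)" "card H = 16" and xy: "x \<in> H" "y \<in> H"
  shows "x \<otimes>\<^bsub>Frob20 \<times>\<times> C4\<^esub> y = y \<otimes>\<^bsub>Frob20 \<times>\<times> C4\<^esub> x"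
proof -
  have "x \<otimes>\<^bsub>Frob20 \<times>\<times> C4\<^esub> y \<in> H" "y \<otimes>\<^bsub>Frob20 \<times>\<times> C4\<^esub> x \<in> H"
    using xy H(1) by (simp_all add: subgroup.m_closed)
  moreover have "fst (fst (x \<otimes>\<^bsub>Frob20 \<times>\<times> C4\<^esub> y)) = fst (fst (y \<otimes>\<^bsub>Frob20 \<times>\<times> C4\<^esub> x))"
    by (simp add: mult_DirProd' Frob20_fst_mult mult.commute)
  ultimately have "fst (x \<otimes>\<^bsub>Frob20 \<times>\<times> C4\<^esub> y) = fst (y \<otimes>\<^bsub>Frob20 \<times>\<times> C4\<^esub> x)"
    using Frob20_C4_subgroup_16(2)[OF H] by (meson image_eqI inj_onD)
  then show ?thesis
    by (simp add: mult_DirProd' prod_eq_iff add.commute)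
qed

lemma Frob20_C4_subgroup_16_core_subset:
  assumes H: "subgroup H (Frob20 \<times>\<times> C4)" "card H = 16"
  shows "core_in (Frob20 \<times>\<times> C4) (carrier (Frob20 \<times>\<times> C4)) H \<subseteq> {(1, 0)} \<times> carrier C4"
proof
  interpret FC: group "Frob20 \<times>\<times> C4"
    by (rule group_Frob20_C4)
  have inj: "inj_on fst (fst ` H)"
    using Frob20_C4_subgroup_16[OF H] by simp
  fix p
  assume "p \<in> core_in (Frob20 \<times>\<times> C4) (carrier (Frob20 \<times>\<times> C4)) H"
  then have p_carrier: "p \<in> carrier (Frob20 \<times>\<times> C4)" and conj:
    "\<And>g. g \<in> carrier (Frob20 \<times>\<times> C4) \<Longrightarrow>
      inv\<^bsub>Frob20 \<times>\<times> C4\<^esub> g \<otimes>\<^bsub>Frob20 \<times>\<times> C4\<^esub> p \<otimes>\<^bsub>Frob20 \<times>\<times> C4\<^esub> g \<in> H"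
    using FC.mem_core_in_iff[OF subset_refl subgroup.subset[OF H(1)]] FC.one_closed by blast+
  have pH: "p \<in> H"
    using conj[OF FC.one_closed] by (simp only: FC.inv_one FC.l_one FC.r_one p_carrier)
  then obtain a b c where abc: "p = ((a, b), c)" "a \<in> {1..4}" "b \<in> {0..4}" "(a, b) \<in> fst ` H"
    using subgroup.subset[OF H(1)] by (force simp: Frob20_carrier)
  (* Conjugation by a translation fixes the slope a, so injectivity of fst on fst ` H forces a = 1. *)
  have "inv\<^bsub>Frob20 \<times>\<times> C4\<^esub> ((1, 4), 0) = ((1, 1), 0)"
    by (rule FC.inv_equality) (simp_all add: Frob20_carrier)
  then have "((1, 1), 0) \<otimes>\<^bsub>Frob20 \<times>\<times> C4\<^esub> p \<otimes>\<^bsub>Frob20 \<times>\<times> C4\<^esub> ((1, 4), 0) \<in> H"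
    using conj[of "((1, 4), 0)"] by (simp add: Frob20_carrier)
  then have "(a, (4 * a + b + 1) mod 5) \<in> fst ` H"
    using abc by (force simp: mod_simps algebra_simps)
  then have "(a, (4 * a + b + 1) mod 5) = (a, b)"
    using abc(4) by (intro inj_onD[OF inj]) simp_all
  moreover have "a = 1 \<or> a = 2 \<or> a = 3 \<or> a = 4" "b = 0 \<or> b = 1 \<or> b = 2 \<or> b = 3 \<or> b = 4"
    using abc(2,3) by auto
  ultimately have "a = 1"
    by (elim disjE) simp_all
  moreover have "(1, 0) \<in> fst ` H"
    using subgroup.one_closed[OF H(1)] by force
  ultimately have "(a, b) = (1, 0)"
    using abc(4) by (intro inj_onD[OF inj]) simp_all
  then show "p \<in> {(1, 0)} \<times> carrier C4"
    using abc(1) pH subgroup.subset[OF H(1)] by auto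
qed

lemma Frob20_C4_subgroup_16_core:
  assumes H: "subgroup H (Frob20 \<times>\<times> C4)" "card H = 16"
  shows "core_in (Frob20 \<times>\<times> C4) (carrier (Frob20 \<times>\<times> C4)) H = {(1, 0)} \<times> carrier C4"
proof
  interpret FC: group "Frob20 \<times>\<times> C4"
    by (rule group_Frob20_C4)
  show "core_in (Frob20 \<times>\<times> C4) (carrier (Frob20 \<times>\<times> C4)) H \<subseteq> {(1, 0)} \<times> carrier C4"
    by (rule Frob20_C4_subgroup_16_core_subset[OF H])
  show "{(1, 0)} \<times> carrier C4 \<subseteq> core_in (Frob20 \<times>\<times> C4) (carrier (Frob20 \<times>\<times> C4)) H"
  proof
    fix p :: "(int \<times> int) \<times> int"
    assume p: "p \<in> {(1, 0)} \<times> carrier C4"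
    show "p \<in> core_in (Frob20 \<times>\<times> C4) (carrier (Frob20 \<times>\<times> C4)) H"
    proof (rule FC.central_mem_core_in[OF subgroup.subset[OF H(1)]])
      have "(1, 0) \<in> fst ` H"
        using subgroup.one_closed[OF H(1)] by force
      then show "p \<in> H"
        using p Frob20_C4_subgroup_16(1)[OF H] by auto
      show "p \<otimes>\<^bsub>Frob20 \<times>\<times> C4\<^esub> g = g \<otimes>\<^bsub>Frob20 \<times>\<times> C4\<^esub> p" if "g \<in> carrier (Frob20 \<times>\<times> C4)" for g
        using p that by (auto simp: Frob20_carrier mult_DirProd' add.commute)
    qed
  qed
qed

lemma Frob20_C4_central_pow: "((1, 0), 1) [^]\<^bsub>Frob20 \<times>\<times> C4\<^esub> (n::nat) = ((1, 0), int n mod 4)"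
  by (induction n) (simp_all add: mod_simps add.commute)

lemma ord_Frob20_C4_central: "group.ord (Frob20 \<times>\<times> C4) ((1, 0), 1) = 4"
proof -
  interpret FC: group "Frob20 \<times>\<times> C4"
    by (rule group_Frob20_C4)
  have "((1, 0), 1) [^]\<^bsub>Frob20 \<times>\<times> C4\<^esub> n = \<one>\<^bsub>Frob20 \<times>\<times> C4\<^esub> \<longleftrightarrow> 4 dvd n" for n :: nat
    by (simp add: Frob20_C4_central_pow) presburger
  then show ?thesis
    by (simp add: FC.ord_unique Frob20_carrier)
qed

lemma Frob20_C4_central_range: "{(1, 0)} \<times> carrier C4 = range (\<lambda>n::int. ((1, 0), 1) [^]\<^bsub>Frob20 \<times>\<times> C4\<^esub> n)"
proof
  interpret FC: group "Frob20 \<times>\<times> C4"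
    by (rule group_Frob20_C4)
  show "{(1, 0)} \<times> carrier C4 \<subseteq> range (\<lambda>n::int. ((1, 0), 1) [^]\<^bsub>Frob20 \<times>\<times> C4\<^esub> n)"
  proof
    fix p :: "(int \<times> int) \<times> int"
    assume "p \<in> {(1, 0)} \<times> carrier C4"
    then obtain c where "p = ((1, 0), c)" "c \<in> {0..3}"
      by (auto simp: carrier_integer_mod_group)
    then have "p = ((1, 0), 1) [^]\<^bsub>Frob20 \<times>\<times> C4\<^esub> nat c"
      by (simp add: Frob20_C4_central_pow)
    then have "p = ((1, 0), 1) [^]\<^bsub>Frob20 \<times>\<times> C4\<^esub> int (nat c)"
      by (simp only: int_pow_int)
    then show "p \<in> range (\<lambda>n::int. ((1, 0), 1) [^]\<^bsub>Frob20 \<times>\<times> C4\<^esub> n)"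
      by blast
  qed
  have "subgroup ({\<one>\<^bsub>Frob20\<^esub>} \<times> carrier C4) (Frob20 \<times>\<times> C4)"
    by (intro DirProd_subgroups group_Frob20 group.triv_subgroup group.subgroup_self) simp_all
  then have "((1, 0), 1) [^]\<^bsub>Frob20 \<times>\<times> C4\<^esub> n \<in> {\<one>\<^bsub>Frob20\<^esub>} \<times> carrier C4" for n :: int
    by (rule FC.subgroup_int_pow_closed) (simp add: carrier_integer_mod_group)
  then show "range (\<lambda>n::int. ((1, 0), 1) [^]\<^bsub>Frob20 \<times>\<times> C4\<^esub> n) \<subseteq> {(1, 0)} \<times> carrier C4"
    by (simp only: Frob20_one image_subset_iff) blast
qed

lemma (in group) Frob20_C4_subgroup_16_structure:
  assumes iso: "G \<cong> Frob20 \<times>\<times> C4" and S: "subgroup S G" "card S = 16"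
  shows "\<And>x y. x \<in> S \<Longrightarrow> y \<in> S \<Longrightarrow> x \<otimes> y = y \<otimes> x"
    and "\<exists>a\<in>S. ord a = 4 \<and> core_in G (carrier G) S = range (\<lambda>n::int. a [^] n)"
proof -
  obtain \<phi> where \<phi>: "\<phi> \<in> iso G (Frob20 \<times>\<times> C4)"
    using iso by (auto simp: is_iso_def)
  interpret \<phi>: group_hom G "Frob20 \<times>\<times> C4" \<phi>
    using \<phi> by (simp add: group_hom_def group_hom_axioms_def group_Frob20_C4 iso_def is_group)
  have bij: "bij_betw \<phi> (carrier G) (carrier (Frob20 \<times>\<times> C4))"
    using \<phi> by (simp add: iso_def)
  then have inj: "inj_on \<phi> (carrier G)"
    by (simp add: bij_betw_def)
  have S_carrier: "S \<subseteq> carrier G"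
    by (rule subgroup.subset[OF S(1)])
  have H: "subgroup (\<phi> ` S) (Frob20 \<times>\<times> C4)" "card (\<phi> ` S) = 16"
    using \<phi>.subgroup_img_is_subgroup[OF S(1)] S(2) inj_on_subset[OF inj S_carrier]
    by (simp_all add: card_image)
  show "x \<otimes> y = y \<otimes> x" if xy: "x \<in> S" "y \<in> S" for x y
  proof -
    have xy_carrier: "x \<in> carrier G" "y \<in> carrier G"
      using xy S_carrier by auto
    have "\<phi> x \<otimes>\<^bsub>Frob20 \<times>\<times> C4\<^esub> \<phi> y = \<phi> y \<otimes>\<^bsub>Frob20 \<times>\<times> C4\<^esub> \<phi> x"
      using xy by (intro Frob20_C4_subgroup_16_comm[OF H]) auto
    then have "\<phi> (x \<otimes> y) = \<phi> (y \<otimes> x)"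
      using xy_carrier by simp
    then show ?thesis
      using xy_carrier by (intro inj_onD[OF inj]) auto
  qed
  define a where "a = inv_into (carrier G) \<phi> ((1, 0), 1)"
  have a: "a \<in> carrier G" "\<phi> a = ((1, 0), 1)"
    using bij unfolding a_def by (auto simp: bij_betw_def carrier_integer_mod_group Frob20_carrier
        intro: inv_into_into f_inv_into_f)
  have core_S: "core_in G (carrier G) S \<subseteq> S"
    by (rule core_in_subset[OF subset_refl S_carrier one_closed])
  have "\<phi> ` core_in G (carrier G) S = range (\<lambda>n::int. \<phi> a [^]\<^bsub>Frob20 \<times>\<times> C4\<^esub> n)"
    using \<phi>.core_in_image[OF bij S_carrier] Frob20_C4_subgroup_16_core[OF H] Frob20_C4_central_range a(2)
    by simp
  then have core: "core_in G (carrier G) S = range (\<lambda>n::int. a [^] n)"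
    using \<phi>.inj_image_eq_range_int_pow[OF inj _ a(1)] core_S S_carrier by blast
  moreover have "a \<in> S"
    using core core_S int_pow_1[OF a(1)] by (metis rangeI subsetD)
  moreover have "ord a = 4"
    using \<phi>.ord_inj_image[OF inj a(1)] a(2) ord_Frob20_C4_central by simp
  ultimately show "\<exists>a\<in>S. ord a = 4 \<and> core_in G (carrier G) S = range (\<lambda>n::int. a [^] n)"
    by blast
qed

lemma (in group) Frob20_C4_stabiliser:
  assumes Gx: "subgroup Gx G" and Gxy: "subgroup Gxy G" "Gxy \<subseteq> Gx"
    and card: "card Gx = 5 * card Gxy" and iso: "G\<lparr>carrier := Gx\<rparr> \<cong> Frob20 \<times>\<times> C4"
  shows "card Gxy = 16"
    and "\<And>x y. x \<in> Gxy \<Longrightarrow> y \<in> Gxy \<Longrightarrow> x \<otimes> y = y \<otimes> x"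
    and "\<exists>a\<in>Gxy. ord a = 4 \<and> core_in G Gx Gxy = range (\<lambda>n::int. a [^] n)"
proof -
  interpret Gx: group "G\<lparr>carrier := Gx\<rparr>"
    by (rule subgroup.subgroup_is_group[OF Gx is_group])
  show card_Gxy: "card Gxy = 16"
    using card iso_same_card[OF iso] card_Frob20_C4 by simp
  note Gxy_structure = Gx.Frob20_C4_subgroup_16_structure[OF iso subgroup_incl[OF Gxy(1) Gx Gxy(2)] card_Gxy]
  show "x \<otimes> y = y \<otimes> x" if "x \<in> Gxy" "y \<in> Gxy" for x y
    using Gxy_structure(1)[OF that] by simp
  obtain a where a: "a \<in> Gxy" "group.ord (G\<lparr>carrier := Gx\<rparr>) a = 4"
    and core: "core_in (G\<lparr>carrier := Gx\<rparr>) Gx Gxy = range (\<lambda>n::int. a [^]\<^bsub>G\<lparr>carrier := Gx\<rparr>\<^esub> n)"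
    using Gxy_structure(2) by auto
  have "a \<in> Gx"
    using a(1) Gxy(2) by blast
  then have "ord a = 4" "core_in G Gx Gxy = range (\<lambda>n::int. a [^] n)"
    using a(2) core by (simp_all add: ord_consistent[OF Gx] int_pow_consistent[OF Gx] core_in_consistent[OF Gx])
  then show "\<exists>a\<in>Gxy. ord a = 4 \<and> core_in G Gx Gxy = range (\<lambda>n::int. a [^] n)"
    using a(1) by blast
qed

section \<open>Recognising C4 wr C2\<close>

lemma C4_wr_C2_carrier: "carrier C4_wr_C2 = ({0..3} \<times> {0..3}) \<times> {0..1}"
  by (auto simp: C4_wr_C2_def)

lemma C4_wr_C2_mult [simp]:
  "((i, j), k) \<otimes>\<^bsub>C4_wr_C2\<^esub> ((c, d), u) =
    ((if k = 0 then ((i + c) mod 4, (j + d) mod 4) else ((i + d) mod 4, (j + c) mod 4)), (k + u) mod 2)"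
  by (simp add: C4_wr_C2_def)

lemma C4_wr_C2_m_closed:
  "x \<in> carrier C4_wr_C2 \<Longrightarrow> y \<in> carrier C4_wr_C2 \<Longrightarrow> x \<otimes>\<^bsub>C4_wr_C2\<^esub> y \<in> carrier C4_wr_C2"
  by (cases x, cases y) (auto simp: C4_wr_C2_carrier)

definition wreath_word :: "('a, 'b) monoid_scheme \<Rightarrow> 'a \<Rightarrow> 'a \<Rightarrow> 'a \<Rightarrow> (int \<times> int) \<times> int \<Rightarrow> 'a"
  where "wreath_word G a b s = (\<lambda>((i, j), k). a [^]\<^bsub>G\<^esub> i \<otimes>\<^bsub>G\<^esub> b [^]\<^bsub>G\<^esub> j \<otimes>\<^bsub>G\<^esub> s [^]\<^bsub>G\<^esub> k)"

lemma (in group) wreath_word_mem_subgroup: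
  assumes "subgroup E G" "a \<in> E" "b \<in> E" "s \<in> E"
  shows "wreath_word G a b s x \<in> E"
  using assms by (auto simp: wreath_word_def split: prod.split
      intro!: subgroup.m_closed[OF assms(1)] subgroup_int_pow_closed[OF assms(1)])

lemma (in group) wreath_word_hom:
  assumes H: "subgroup H G" "\<And>x y. x \<in> H \<Longrightarrow> y \<in> H \<Longrightarrow> x \<otimes> y = y \<otimes> x"
    and ab: "a \<in> H" "b \<in> H" "a [^] (4::nat) = \<one>" "b [^] (4::nat) = \<one>"
    and s: "s \<in> carrier G" "s \<otimes> s = \<one>" "s \<otimes> a \<otimes> inv s = b"
  shows "wreath_word G a b s \<in> hom C4_wr_C2 G"
proof -
  have ab_carrier: "a \<in> carrier G" "b \<in> carrier G"
    using ab subgroup.subset[OF H(1)] by auto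
  have sbs: "s \<otimes> b \<otimes> inv s = a"
    using conj_conj_involution[OF s(1,2) ab_carrier(1)] s(3) by simp
  have comm: "b [^] j \<otimes> (a [^] c \<otimes> z) = a [^] c \<otimes> (b [^] j \<otimes> z)" if "z \<in> carrier G" for j c :: int and z
    using that ab H(2)[of "b [^] j" "a [^] c"] ab_carrier subgroup_int_pow_closed[OF H(1)]
    by (simp flip: m_assoc)
  have sa: "s \<otimes> (a [^] n \<otimes> z) = b [^] n \<otimes> (s \<otimes> z)" and sb: "s \<otimes> (b [^] n \<otimes> z) = a [^] n \<otimes> (s \<otimes> z)"
    if "z \<in> carrier G" for n :: int and z
    using mult_int_pow_conj[OF s(1) ab_carrier(1) that] mult_int_pow_conj[OF s(1) ab_carrier(2) that]
    unfolding s(3) sbs by simp_all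
  have swap: "s \<otimes> (a [^] c \<otimes> (b [^] d \<otimes> z)) = a [^] d \<otimes> (b [^] c \<otimes> (s \<otimes> z))"
    if "z \<in> carrier G" for c d :: int and z
    using that ab_carrier s(1) by (simp add: sa sb comm)
  have s2: "s [^] (2::nat) = \<one>"
    using s by (simp add: numeral_2_eq_2)
  have word_mod: "wreath_word G a b s ((i mod 4, j mod 4), k mod 2) = wreath_word G a b s ((i, j), k)" for i j k
    using int_pow_mod[OF ab_carrier(1) ab(3)] int_pow_mod[OF ab_carrier(2) ab(4)] int_pow_mod[OF s(1) s2]
    by (simp add: wreath_word_def)
  have word_mult: "wreath_word G a b s ((i, j), k) \<otimes> wreath_word G a b s ((c, d), u) =
      wreath_word G a b s (if k = 0 then ((i + c, j + d), k + u) else ((i + d, j + c), k + u))"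
    if "k \<in> {0, 1}" for i j k c d u
    using that ab_carrier s(1) by (auto simp: wreath_word_def m_assoc int_pow_mult comm swap)
  show ?thesis
  proof (rule homI)
    show "wreath_word G a b s x \<in> carrier G" for x
      using ab_carrier s(1) by (auto simp: wreath_word_def split: prod.splits)
    fix x y
    assume "x \<in> carrier C4_wr_C2" "y \<in> carrier C4_wr_C2"
    then obtain i j k c d u where xy: "x = ((i, j), k)" "y = ((c, d), u)" "k \<in> {0, 1}"
      unfolding C4_wr_C2_carrier by fastforce
    then show "wreath_word G a b s (x \<otimes>\<^bsub>C4_wr_C2\<^esub> y) = wreath_word G a b s x \<otimes> wreath_word G a b s y"
      using word_mult[OF xy(3)] word_mod by simp
  qed
qed

lemma (in group) wreath_word_inj:
  assumes H: "subgroup H G" and ab: "a \<in> H" "b \<in> H" "ord a = 4" "ord b = 4"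
    and disjoint: "range (\<lambda>n::int. a [^] n) \<inter> range (\<lambda>n::int. b [^] n) = {\<one>}"
    and s: "s \<in> carrier G" "s \<notin> H"
  shows "inj_on (wreath_word G a b s) (carrier C4_wr_C2)"
proof (rule inj_onI)
  have ab_carrier: "a \<in> carrier G" "b \<in> carrier G"
    using ab subgroup.subset[OF H] by auto
  have word_H: "a [^] i \<otimes> b [^] j \<in> H" for i j :: int
    using ab by (simp add: subgroup.m_closed[OF H] subgroup_int_pow_closed[OF H])
  fix x y
  assume "x \<in> carrier C4_wr_C2" "y \<in> carrier C4_wr_C2" and eq: "wreath_word G a b s x = wreath_word G a b s y"
  then obtain i j k c d u where xy: "x = ((i, j), k)" "y = ((c, d), u)"
    and ranges: "i \<in> {0..3}" "j \<in> {0..3}" "c \<in> {0..3}" "d \<in> {0..3}" "k \<in> {0, 1}" "u \<in> {0, 1}"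
    unfolding C4_wr_C2_carrier by fastforce
  have coset_eq: "p \<otimes> s [^] k = q \<otimes> s [^] u \<Longrightarrow> p = q \<and> k = u" if "p \<in> H" "q \<in> H" for p q
  proof -
    have pq: "p \<in> carrier G" "q \<in> carrier G" "inv q \<in> H"
      using that subgroup.subset[OF H] subgroup.m_inv_closed[OF H] by auto
    have "s \<notin> H" "inv p \<otimes> q \<in> H" "inv q \<otimes> p \<in> H"
      using s that pq subgroup.m_closed[OF H] subgroup.m_inv_closed[OF H] by auto
    then show "p \<otimes> s [^] k = q \<otimes> s [^] u \<Longrightarrow> p = q \<and> k = u"
      using ranges(5,6) pq s(1) by (auto simp: inv_solve_left' inv_solve_right' m_assoc)
  qed
  have "a [^] i \<otimes> b [^] j = a [^] c \<otimes> b [^] d" "k = u"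
    using eq coset_eq[OF word_H word_H] by (simp_all add: xy wreath_word_def)
  then have "i = c" "j = d"
    using inj_onD[OF int_pow_pair_inj[OF ab_carrier ab(3,4) disjoint], of "(i, j)" "(c, d)"] ranges
    by auto
  then show "x = y"
    using xy \<open>k = u\<close> by simp
qed

lemma (in group) index_two_square:
  assumes H: "subgroup H G" "\<And>x y. x \<in> H \<Longrightarrow> y \<in> H \<Longrightarrow> x \<otimes> y = y \<otimes> x" "card H = n * n" "0 < n"
    and a: "a \<in> H" "ord a = n" "t \<otimes> a \<otimes> inv t \<in> H" "ord (t \<otimes> a \<otimes> inv t) = n"
    and disjoint: "range (\<lambda>n::int. a [^] n) \<inter> range (\<lambda>n::int. (t \<otimes> a \<otimes> inv t) [^] n) = {\<one>}"
    and t: "t \<in> carrier G" "t \<otimes> t \<in> H"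
  obtains i :: int where "t \<otimes> t = a [^] i \<otimes> (t \<otimes> a \<otimes> inv t) [^] i"
proof -
  define b where "b = t \<otimes> a \<otimes> inv t"
  have ab_carrier: "a \<in> carrier G" "b \<in> carrier G"
    using a t(1) subgroup.subset[OF H(1)] unfolding b_def by auto
  obtain i j :: int where ij: "t \<otimes> t = a [^] i \<otimes> b [^] j"
    using subgroup_int_pow_pairs[OF H(1,3,4) a(1,3,2,4)[folded b_def] disjoint[folded b_def] t(2)] .
  (* Conjugation by t fixes t \<otimes> t and swaps a and b, so a^i b^j = a^j b^i. *)
  have "t \<otimes> b \<otimes> inv t = (t \<otimes> t \<otimes> a) \<otimes> (inv t \<otimes> inv t)"
    unfolding b_def using t(1) ab_carrier by (simp add: m_assoc)
  also have "\<dots> = a"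
    using t(1) ab_carrier by (simp add: H(2)[OF t(2) a(1)] m_assoc)
  finally have tbt: "t \<otimes> b \<otimes> inv t = a" .
  have "a [^] i \<otimes> b [^] j = t \<otimes> (t \<otimes> t) \<otimes> inv t"
    using t(1) by (simp add: m_assoc flip: ij)
  also have "\<dots> = (t \<otimes> a [^] i \<otimes> inv t) \<otimes> (t \<otimes> b [^] j \<otimes> inv t)"
    using ij t(1) ab_carrier by (simp add: m_assoc)
  also have "\<dots> = a [^] j \<otimes> b [^] i"
    unfolding conj_int_pow[OF t(1) ab_carrier(1)] conj_int_pow[OF t(1) ab_carrier(2)] tbt b_def[symmetric]
    using a(1,3) unfolding b_def by (simp add: H(2) subgroup_int_pow_closed[OF H(1)])
  finally have "t \<otimes> t = a [^] i \<otimes> b [^] i"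
    using ij int_pow_pair_cancel[OF ab_carrier disjoint[folded b_def]] by metis
  then show thesis
    using that b_def by blast
qed

lemma (in group) index_two_involution:
  fixes i :: int
  assumes H: "subgroup H G" "\<And>x y. x \<in> H \<Longrightarrow> y \<in> H \<Longrightarrow> x \<otimes> y = y \<otimes> x"
    and E: "subgroup E G" "H \<subseteq> E"
    and a: "a \<in> H" and t: "t \<in> E" "t \<notin> H" "t \<otimes> a \<otimes> inv t \<in> H"
    and tt: "t \<otimes> t = a [^] i \<otimes> (t \<otimes> a \<otimes> inv t) [^] i"
  shows "t \<otimes> a [^] (- i) \<in> E - H"
    and "t \<otimes> a [^] (- i) \<otimes> (t \<otimes> a [^] (- i)) = \<one>"
    and "t \<otimes> a [^] (- i) \<otimes> a \<otimes> inv (t \<otimes> a [^] (- i)) = t \<otimes> a \<otimes> inv t"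
proof -
  have t_carrier: "t \<in> carrier G"
    using t(1) subgroup.subset[OF E(1)] by blast
  have a_carrier: "a \<in> carrier G"
    using a subgroup.subset[OF H(1)] by blast
  have pow_H: "a [^] (n::int) \<in> H" "(t \<otimes> a \<otimes> inv t) [^] (n::int) \<in> H" for n
    using a t(3) by (simp_all add: subgroup_int_pow_closed[OF H(1)])
  show "t \<otimes> a [^] (- i) \<in> E - H"
  proof
    show "t \<otimes> a [^] (- i) \<in> E"
      using pow_H(1) E(2) by (intro subgroup.m_closed[OF E(1) t(1)]) blast
    show "t \<otimes> a [^] (- i) \<notin> H"
    proof
      assume "t \<otimes> a [^] (- i) \<in> H"
      then have "t \<otimes> a [^] (- i) \<otimes> a [^] i \<in> H"
        by (rule subgroup.m_closed[OF H(1) _ pow_H(1)])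
      then show False
        using t(2) t_carrier a_carrier by (simp add: m_assoc int_pow_neg)
    qed
  qed
  have b_carrier: "t \<otimes> a \<otimes> inv t \<in> carrier G"
    using t_carrier a_carrier by simp
  have "t \<otimes> a [^] (- i) \<otimes> (t \<otimes> a [^] (- i)) = (t \<otimes> a [^] (- i) \<otimes> inv t) \<otimes> (t \<otimes> t) \<otimes> a [^] (- i)"
    using t_carrier a_carrier by (simp add: m_assoc)
  also have "\<dots> = (t \<otimes> a \<otimes> inv t) [^] (- i) \<otimes> a [^] i \<otimes> ((t \<otimes> a \<otimes> inv t) [^] i \<otimes> a [^] (- i))"
    unfolding tt conj_int_pow[OF t_carrier a_carrier] using a_carrier b_carrier by (simp add: m_assoc)
  also have "\<dots> = a [^] i \<otimes> ((t \<otimes> a \<otimes> inv t) [^] (- i) \<otimes> (t \<otimes> a \<otimes> inv t) [^] i) \<otimes> a [^] (- i)"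
    using H(2)[OF pow_H(2) pow_H(1)] a_carrier b_carrier by (simp add: m_assoc)
  also have "\<dots> = \<one>"
    using a_carrier b_carrier by (simp add: int_pow_neg)
  finally show "t \<otimes> a [^] (- i) \<otimes> (t \<otimes> a [^] (- i)) = \<one>" .
  have "a [^] (- i) \<otimes> a = a \<otimes> a [^] (- i)"
    using H(2)[OF pow_H(1) a] .
  then show "t \<otimes> a [^] (- i) \<otimes> a \<otimes> inv (t \<otimes> a [^] (- i)) = t \<otimes> a \<otimes> inv t"
    using t_carrier a_carrier by (simp add: inv_mult_group m_assoc flip: m_assoc[of "a [^] (- i)"])
qed

lemma (in group) index_two_extension_iso_C4_wr_C2:
  assumes H: "subgroup H G" "\<And>x y. x \<in> H \<Longrightarrow> y \<in> H \<Longrightarrow> x \<otimes> y = y \<otimes> x" "card H = 16"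
    and E: "subgroup E G" "H \<subseteq> E" "finite E" "card E = 2 * card H"
    and a: "a \<in> H" "ord a = 4" and t: "t \<in> E" "t \<notin> H"
    and disjoint: "range (\<lambda>n::int. a [^] n) \<inter> (\<lambda>x. t \<otimes> x \<otimes> inv t) ` range (\<lambda>n::int. a [^] n) = {\<one>}"
  shows "G\<lparr>carrier := E\<rparr> \<cong> C4_wr_C2"
proof -
  define b where "b = t \<otimes> a \<otimes> inv t"
  have t_carrier: "t \<in> carrier G" and a_carrier: "a \<in> carrier G"
    using t(1) a(1) subgroup.subset[OF E(1)] E(2) by auto
  have b: "b \<in> H" "ord b = 4"
    unfolding b_def using index_two_normal(2)[OF H(1) E t a(1)] ord_conj[OF t_carrier a_carrier] a(2)
    by simp_all
  have "(\<lambda>x. t \<otimes> x \<otimes> inv t) ` range (\<lambda>n::int. a [^] n) = range (\<lambda>n::int. b [^] n)"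
    unfolding b_def image_image using t_carrier a_carrier by (simp add: conj_int_pow)
  with disjoint have disjoint_ab: "range (\<lambda>n::int. a [^] n) \<inter> range (\<lambda>n::int. b [^] n) = {\<one>}"
    by simp
  obtain i :: int where "t \<otimes> t = a [^] i \<otimes> (t \<otimes> a \<otimes> inv t) [^] i"
    using index_two_square[OF H(1,2) _ _ a b[unfolded b_def] disjoint_ab[unfolded b_def] t_carrier
        index_two_normal(1)[OF H(1) E t]] H(3) by force
  note involution = index_two_involution[OF H(1,2) E(1,2) a(1) t b(1)[unfolded b_def] this]
  define s where "s = t \<otimes> a [^] (- i)"
  have s: "s \<in> E" "s \<notin> H" "s \<otimes> s = \<one>" "s \<otimes> a \<otimes> inv s = b"
    using involution unfolding s_def b_def by simp_all
  have s_carrier: "s \<in> carrier G"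
    using s(1) subgroup.subset[OF E(1)] by blast
  have hom: "wreath_word G a b s \<in> hom C4_wr_C2 G"
    using pow_ord_eq_1[OF a_carrier] pow_ord_eq_1[of b] a(2) b subgroup.subset[OF H(1)]
    by (intro wreath_word_hom[OF H(1,2) a(1) b(1) _ _ s_carrier s(3,4)]) auto
  have inj: "inj_on (wreath_word G a b s) (carrier C4_wr_C2)"
    by (rule wreath_word_inj[OF H(1) a(1) b(1) a(2) b(2) disjoint_ab s_carrier s(2)])
  have "wreath_word G a b s ` carrier C4_wr_C2 \<subseteq> E"
    using wreath_word_mem_subgroup[OF E(1)] a(1) b(1) s(1) E(2) by blast
  moreover have "card (wreath_word G a b s ` carrier C4_wr_C2) = card E"
    using E(4) H(3) inj by (simp add: card_image C4_wr_C2_carrier card_cartesian_product)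
  ultimately have "wreath_word G a b s ` carrier C4_wr_C2 = E"
    using E(3) by (intro card_subset_eq) simp_all
  then have "bij_betw (wreath_word G a b s) (carrier C4_wr_C2) (carrier (G\<lparr>carrier := E\<rparr>))"
    using inj by (simp add: bij_betw_def)
  moreover have "wreath_word G a b s \<in> hom C4_wr_C2 (G\<lparr>carrier := E\<rparr>)"
    using hom \<open>wreath_word G a b s ` carrier C4_wr_C2 = E\<close> by (auto simp: hom_def)
  ultimately show ?thesis
    using C4_wr_C2_m_closed by (intro iso_of_bij_hom) auto
qed

theorem mainTheorem8:
  fixes U :: "('a, 'b) monoid_scheme"
    and Gx Ge Gxy :: "'a set"
    and t :: 'a
  assumes grp: "group U"
    and sub_x: "subgroup Gx U" and sub_e: "subgroup Ge U"
    and fin_x: "finite Gx" and fin_e: "finite Ge"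
    and inter: "Gxy = Gx \<inter> Ge"
    and idx_x: "card Gx = 5 * card Gxy"
    and idx_e: "card Ge = 2 * card Gxy"
    and primitive: "\<And>N. N \<subseteq> Gxy \<Longrightarrow> normal N (U\<lparr>carrier := Gx\<rparr>)
                        \<Longrightarrow> normal N (U\<lparr>carrier := Ge\<rparr>) \<Longrightarrow> N = {\<one>\<^bsub>U\<^esub>}"
    and t_e: "t \<in> Ge" and t_nxy: "t \<notin> Gxy"
    and kernel_xy: "core_in U Gx Gxy \<inter> ((t <#\<^bsub>U\<^esub> core_in U Gx Gxy) #>\<^bsub>U\<^esub> inv\<^bsub>U\<^esub> t)
                      = {\<one>\<^bsub>U\<^esub>}"
    and iso_x: "U\<lparr>carrier := Gx\<rparr> \<cong> Frob20 \<times>\<times> C4"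
  shows "U\<lparr>carrier := Ge\<rparr> \<cong> C4_wr_C2"
proof -
  interpret U: group U
    by (rule grp)
  have Gxy: "subgroup Gxy U" "Gxy \<subseteq> Gx" "Gxy \<subseteq> Ge"
    using U.subgroups_Inter_pair[OF sub_x sub_e] inter by auto
  note stabiliser = U.Frob20_C4_stabiliser[OF sub_x Gxy(1,2) idx_x iso_x]
  obtain a where a: "a \<in> Gxy" "group.ord U a = 4"
    and core: "core_in U Gx Gxy = range (\<lambda>n::int. a [^]\<^bsub>U\<^esub> n)"
    using stabiliser(3) by blast
  have "(t <#\<^bsub>U\<^esub> core_in U Gx Gxy) #>\<^bsub>U\<^esub> inv\<^bsub>U\<^esub> t =
      (\<lambda>x. t \<otimes>\<^bsub>U\<^esub> x \<otimes>\<^bsub>U\<^esub> inv\<^bsub>U\<^esub> t) ` core_in U Gx Gxy"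
    using U.core_in_subset[OF subgroup.subset[OF sub_x] subgroup.subset[OF Gxy(1)] subgroup.one_closed[OF sub_x]]
      subgroup.subset[OF Gxy(1)] t_e subgroup.subset[OF sub_e]
    by (intro U.conj_coset_eq_image) auto
  with kernel_xy have "range (\<lambda>n::int. a [^]\<^bsub>U\<^esub> n) \<inter>
      (\<lambda>x. t \<otimes>\<^bsub>U\<^esub> x \<otimes>\<^bsub>U\<^esub> inv\<^bsub>U\<^esub> t) ` range (\<lambda>n::int. a [^]\<^bsub>U\<^esub> n) = {\<one>\<^bsub>U\<^esub>}"
    unfolding core by simp
  then show ?thesis
    using U.index_two_extension_iso_C4_wr_C2[OF Gxy(1) stabiliser(2,1) sub_e Gxy(3) fin_e _ a t_e t_nxy]
      idx_e by blast
qed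

end
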